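(* Let $f:\mathbb{R}^m\to\mathbb{R}\cup\{+\infty\}$ be a proper lower semicontinuous convex function such that $\mathrm{bdry}(S_f)\subseteq f^{-1}(0)$. Consider the statements: (i) there exists $\tau\in(0,+\infty)$ such that $\inf\left\{\left|\min_{\|h\|=1}f'(\bar x,h)\right|:\bar x\in\mathrm{bdry}(S_f)\right\}>\tau$; (ii) there exist constants $c,\varepsilon\in(0,+\infty)$ such that for every proper lsc convex $g:\mathbb{R}^m\to\mathbb{R}\cup\{+\infty\}$ satisfying $S_f\subseteq S_g$ and $\mathrm{Lip}(f-g)<\varepsilon$, one has $\tau_{\min}(g)\le c$; (iii) there exist constants $c,\varepsilon\in(0,+\infty)$ such that for every proper lsc convex $g:\mathbb{R}^m\to\mathbb{R}\cup\{+\infty\}$ satisfying $\mathrm{bdry}(S_f)\cap g^{-1}(0)\neq\emptyset$ and $\mathrm{Lip}(f-g)<\varepsilon$, one has $\tau_{\min}(g)\le c$. Then (i) implies (ii), and (iii) implies (i).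
   Context: $\mathbb{R}^m$ carries the Euclidean norm, $d(x,D)=\inf\{\|x-y\|:y\in D\}$, $\mathrm{bdry}(D)$ is the boundary of $D$. $f'(\bar x,h):=\lim_{t\to0^+}\frac{f(\bar x+th)-f(\bar x)}{t}$ is the directional derivative. For a proper lsc convex $g$, $S_g:=\{x: g(x)\le0\}$ and the global error bound modulus is $\tau_{\min}(g):=\inf\{\tau>0: d(x,S_g)\le\tau[g(x)]_+\ \forall x\in\mathbb{R}^m\}$, where $[t]_+=\max\{t,0\}$ and $\inf\emptyset=+\infty$. For a map $\phi$, $\mathrm{Lip}(\phi):=\sup_{u\neq v}\frac{|\phi(u)-\phi(v)|}{\|u-v\|}$. *)

theory Defs
  imports "HOL-Analysis.Analysis"
begin

definition proper_fun :: "('a \<Rightarrow> ereal) \<Rightarrow> bool" where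
  "proper_fun f \<longleftrightarrow> (\<forall>x. f x \<noteq> -\<infinity>) \<and> (\<exists>x. f x \<noteq> \<infinity>)"

definition lsc_fun :: "('a::topological_space \<Rightarrow> ereal) \<Rightarrow> bool" where
  "lsc_fun f \<longleftrightarrow> (\<forall>x. f x \<le> Liminf (at x) f)"

definition convex_fun :: "('a::real_vector \<Rightarrow> ereal) \<Rightarrow> bool" where
  "convex_fun f \<longleftrightarrow> convex {(x, t::real). f x \<le> ereal t}"

definition plsc_convex :: "('a::euclidean_space \<Rightarrow> ereal) \<Rightarrow> bool" where
  "plsc_convex f \<longleftrightarrow> proper_fun f \<and> lsc_fun f \<and> convex_fun f"

definition sublev :: "('a \<Rightarrow> ereal) \<Rightarrow> 'a set" where
  "sublev g = {x. g x \<le> 0}"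

text \<open>d(x,D) = inf {||x-y|| : y in D}, with inf of the empty set = +infinity.\<close>
definition setdist_e :: "'a::metric_space \<Rightarrow> 'a set \<Rightarrow> ereal" where
  "setdist_e x D = (INF y\<in>D. ereal (dist x y))"

text \<open>Global error bound modulus tau_min(g) (inf of the empty set = +infinity).\<close>
definition tau_min :: "('a::metric_space \<Rightarrow> ereal) \<Rightarrow> ereal" where
  "tau_min g = Inf {ereal \<tau> | \<tau>. \<tau> > 0 \<and>
       (\<forall>x. setdist_e x (sublev g) \<le> ereal \<tau> * max (g x) 0)}"

definition dir_deriv :: "('a::real_normed_vector \<Rightarrow> ereal) \<Rightarrow> 'a \<Rightarrow> 'a \<Rightarrow> ereal" where
  "dir_deriv f x h = Lim (at_right 0) (\<lambda>t::real. (f (x + t *\<^sub>R h) - f x) / ereal t)"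

text \<open>Lip(f - g): the difference f - g is taken on the common effective domain;
  if the effective domains differ, f - g takes the value +infinity at some point
  where the other function is finite, and Lip(f - g) = +infinity.\<close>
definition lip_diff :: "('a::real_normed_vector \<Rightarrow> ereal) \<Rightarrow> ('a \<Rightarrow> ereal) \<Rightarrow> ereal" where
  "lip_diff f g =
     (if {x. f x \<noteq> \<infinity>} = {x. g x \<noteq> \<infinity>} then
        (SUP (u, v) \<in> {(u, v). f u \<noteq> \<infinity> \<and> f v \<noteq> \<infinity> \<and> u \<noteq> v}.
           ereal (\<bar>(real_of_ereal (f u) - real_of_ereal (g u))
                    - (real_of_ereal (f v) - real_of_ereal (g v))\<bar> / norm (u - v)))
      else \<infinity>)"

end

theory Submission
  imports Defs
begin

text \<open>
Convexity makes the directional derivative at a point of the zero level the infimum of the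
difference quotients along the ray. For (i) implies (ii), let \<open>p\<close> be the projection of a point
\<open>x\<close> outside \<open>S_f\<close> and \<open>u = (x - p) / |x - p|\<close> the unit normal there. Then \<open>f'(p,u) \<ge> \<tau>\<close>: either
every slope at \<open>p\<close> exceeds \<open>\<tau>\<close>, or some direction \<open>h\<close> has \<open>f'(p,h) < -\<tau>\<close>, and then \<open>f'(p,u) < \<tau>\<close>
would put the midpoint of \<open>p + s u\<close> and \<open>p + s h\<close> strictly inside \<open>S_f\<close>, which the normality of
\<open>u\<close> allows only for \<open>h = -u\<close>. Hence \<open>f(x) \<ge> \<tau> d(x, S_f)\<close>; this growth persists along the segment
from \<open>p\<close> to \<open>x\<close> and survives every perturbation of Lipschitz constant below \<open>\<tau>/2\<close> that enlarges
\<open>S_f\<close>, which gives \<open>\<tau>_min(g) \<le> 2/\<tau>\<close>.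

For (iii) implies (i), if the minimal slope at a boundary point \<open>xb\<close> has modulus below \<open>\<eta>\<close>, the
perturbation \<open>g = f + \<eta> |. - xb|\<close> vanishes only at \<open>xb\<close>, while along a direction of almost minimal
slope it grows at rate below \<open>3 \<eta>\<close>; so \<open>\<tau>_min(g) \<ge> 1/(3 \<eta>)\<close>, impossible for small \<open>\<eta>\<close>.
\<close>

lemma plsc_convexD:
  assumes "plsc_convex f"
  shows "convex_fun f" "lsc_fun f" "f x \<noteq> -\<infinity>"
  using assms unfolding plsc_convex_def proper_fun_def by auto

lemma convex_funD:
  assumes "convex_fun f" "f a \<le> ereal \<alpha>" "f b \<le> ereal \<beta>" "0 \<le> l" "l \<le> 1"
  shows "f ((1 - l) *\<^sub>R a + l *\<^sub>R b) \<le> ereal ((1 - l) * \<alpha> + l * \<beta>)"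
proof -
  have "(1 - l) *\<^sub>R (a, \<alpha>) + l *\<^sub>R (b, \<beta>) \<in> {(x, t). f x \<le> ereal t}"
    using assms by (intro convexD[OF assms(1)[unfolded convex_fun_def]]) auto
  then show ?thesis by simp
qed

lemma convex_sublev: "convex_fun f \<Longrightarrow> convex (sublev f)"
  unfolding convex_alt sublev_def
  using convex_funD[of f _ 0 _ 0] by (simp add: zero_ereal_def)

lemma closed_sublevel_lsc_fun:
  assumes "lsc_fun f"
  shows "closed {x. f x \<le> a}"
proof -
  have nhds: "\<forall>\<^sub>F y in nhds x. a < f y" if "a < f x" for x
  proof -
    have "a < Liminf (at x) f"
      using that assms order_less_le_trans unfolding lsc_fun_def by blast
    then have "\<forall>\<^sub>F y in at x. a < f y"
      by (rule less_LiminfD)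
    then show ?thesis
      using that by (simp add: eventually_nhds_conv_at)
  qed
  then have "open {x. a < f x}"
  proof (subst open_subopen, intro ballI)
    fix x assume "x \<in> {x. a < f x}"
    then obtain S where "open S" "x \<in> S" "\<forall>y\<in>S. a < f y"
      using nhds unfolding eventually_nhds by blast
    then show "\<exists>T. open T \<and> x \<in> T \<and> T \<subseteq> {x. a < f x}"
      by blast
  qed
  then show ?thesis
    by (simp add: closed_def Compl_eq not_le)
qed

lemma lsc_fun_add_continuous:
  assumes "lsc_fun f" "continuous_on UNIV e"
  shows "lsc_fun (\<lambda>x. f x + ereal (e x))"
  unfolding lsc_fun_def
proof
  fix x
  show "f x + ereal (e x) \<le> Liminf (at x) (\<lambda>y. f y + ereal (e y))"
  proof (cases "at x = bot")
    case False
    show ?thesis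
    proof (rule ereal_le_epsilon2)
      fix k :: real assume "0 < k"
      have "(e \<longlongrightarrow> e x) (at x)"
        using assms(2) by (simp add: continuous_on_def)
      then have "\<forall>\<^sub>F y in at x. e x - k < e y"
        using \<open>0 < k\<close> by (intro order_tendstoD) auto
      have "f x + ereal (e x - k) \<le> Liminf (at x) f + ereal (e x - k)"
        using assms(1) by (intro add_right_mono) (simp add: lsc_fun_def)
      also have "\<dots> = Liminf (at x) (\<lambda>y. f y + ereal (e x - k))"
        using False by (intro Liminf_add_ereal_right[symmetric]) auto
      also have "\<dots> \<le> Liminf (at x) (\<lambda>y. f y + ereal (e y))"
        using \<open>\<forall>\<^sub>F y in at x. e x - k < e y\<close>
        by (intro Liminf_mono) (auto elim!: eventually_mono intro: add_left_mono)
      finally have "f x + ereal (e x - k) + ereal k \<le> Liminf (at x) (\<lambda>y. f y + ereal (e y)) + ereal k"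
        by (rule add_right_mono)
      moreover have "f x + ereal (e x - k) + ereal k = f x + ereal (e x)"
        by (cases "f x") auto
      ultimately show "f x + ereal (e x) \<le> Liminf (at x) (\<lambda>y. f y + ereal (e y)) + ereal k"
        by simp
    qed
  qed simp
qed

lemma convex_fun_add_convex_on:
  assumes "convex_fun f" "\<And>x. f x \<noteq> -\<infinity>" "convex_on UNIV e"
  shows "convex_fun (\<lambda>x. f x + ereal (e x))"
  unfolding convex_fun_def convex_alt
proof clarsimp
  fix a b :: 'a and s t l :: real
  assume "f a + ereal (e a) \<le> ereal s" "f b + ereal (e b) \<le> ereal t" "0 \<le> l" "l \<le> 1"
  moreover from this have "f a \<le> ereal (s - e a)" "f b \<le> ereal (t - e b)"
    using assms(2)[of a] assms(2)[of b] by (cases "f a"; cases "f b"; simp)+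
  ultimately have "f ((1 - l) *\<^sub>R a + l *\<^sub>R b) \<le> ereal ((1 - l) * (s - e a) + l * (t - e b))"
    "ereal (e ((1 - l) *\<^sub>R a + l *\<^sub>R b)) \<le> ereal ((1 - l) * e a + l * e b)"
    using convex_funD[OF assms(1)] convex_onD[OF assms(3)] by auto
  then have "f ((1 - l) *\<^sub>R a + l *\<^sub>R b) + ereal (e ((1 - l) *\<^sub>R a + l *\<^sub>R b))
      \<le> ereal ((1 - l) * (s - e a) + l * (t - e b)) + ereal ((1 - l) * e a + l * e b)"
    by (rule add_mono)
  then show "f ((1 - l) *\<^sub>R a + l *\<^sub>R b) + ereal (e ((1 - l) *\<^sub>R a + l *\<^sub>R b)) \<le> ereal ((1 - l) * s + l * t)"
    by (simp add: algebra_simps)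
qed

lemma plsc_convex_add:
  assumes "plsc_convex f" "continuous_on UNIV e" "convex_on UNIV e"
  shows "plsc_convex (\<lambda>x. f x + ereal (e x))"
proof -
  have "f x \<noteq> \<infinity> \<Longrightarrow> f x + ereal (e x) \<noteq> \<infinity>" "f x \<noteq> -\<infinity> \<Longrightarrow> f x + ereal (e x) \<noteq> -\<infinity>" for x
    by (cases "f x"; simp)+
  then show ?thesis
    using assms lsc_fun_add_continuous convex_fun_add_convex_on
    unfolding plsc_convex_def proper_fun_def by blast
qed

lemma convex_fun_diff_quotient_mono:
  assumes "convex_fun f" "\<And>y. f y \<noteq> -\<infinity>" "f x \<noteq> \<infinity>" "0 < s" "s \<le> t"
  shows "(f (x + s *\<^sub>R h) - f x) / ereal s \<le> (f (x + t *\<^sub>R h) - f x) / ereal t"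
proof -
  obtain a where a: "f x = ereal a"
    using assms(2,3) by (cases "f x") auto
  show ?thesis
  proof (cases "f (x + t *\<^sub>R h)")
    case (real b)
    have "(1 - s/t) *\<^sub>R x + (s/t) *\<^sub>R (x + t *\<^sub>R h) = x + s *\<^sub>R h"
      using assms(4,5) by (simp add: algebra_simps)
    then have "f (x + s *\<^sub>R h) \<le> ereal ((1 - s/t) * a + s/t * b)"
      using convex_funD[OF assms(1), of x a "x + t *\<^sub>R h" b "s/t"] assms(4,5) a real by simp
    then have "(f (x + s *\<^sub>R h) - f x) / ereal s \<le> (ereal ((1 - s/t) * a + s/t * b) - f x) / ereal s"
      using assms(4) by (intro ereal_divide_right_mono ereal_minus_mono) auto
    also have "\<dots> = (f (x + t *\<^sub>R h) - f x) / ereal t"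
      using a real assms(4,5) by (simp add: field_simps)
    finally show ?thesis .
  qed (use a assms(2,4,5) in auto)
qed

lemma dir_deriv_eq_INF:
  assumes "convex_fun f" "\<And>y. f y \<noteq> -\<infinity>" "f x \<noteq> \<infinity>"
  shows "dir_deriv f x h = (INF t\<in>{0<..}. (f (x + t *\<^sub>R h) - f x) / ereal t)"
proof -
  have "((\<lambda>t. (f (x + t *\<^sub>R h) - f x) / ereal t)
      \<longlongrightarrow> (INF t\<in>{0<..}. (f (x + t *\<^sub>R h) - f x) / ereal t)) (at_right 0)"
    using Lim_right_bound[of UNIV 0 "\<lambda>t. (f (x + t *\<^sub>R h) - f x) / ereal t" "-\<infinity>"]
      convex_fun_diff_quotient_mono[OF assms] by simp
  then show ?thesis
    unfolding dir_deriv_def by (rule tendsto_Lim[rotated]) simp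
qed

lemma dir_deriv_le_quotient:
  assumes "convex_fun f" "\<And>y. f y \<noteq> -\<infinity>" "f x \<noteq> \<infinity>" "0 < t"
  shows "dir_deriv f x h \<le> (f (x + t *\<^sub>R h) - f x) / ereal t"
  unfolding dir_deriv_eq_INF[OF assms(1-3)] using assms(4) by (intro INF_lower) simp

lemma dir_deriv_less_imp_ray_below:
  assumes cf: "convex_fun f" and pr: "\<And>y. f y \<noteq> -\<infinity>" and fp: "f p = 0"
    and less: "dir_deriv f p v < ereal c"
  obtains s where "0 < s" "\<And>t. 0 < t \<Longrightarrow> t \<le> s \<Longrightarrow> f (p + t *\<^sub>R v) < ereal (c * t)"
proof -
  obtain s where s: "0 < s" "f (p + s *\<^sub>R v) / ereal s < ereal c"
    using less dir_deriv_eq_INF[OF cf pr, of p v] fp by (auto simp: INF_less_iff)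
  have "f (p + t *\<^sub>R v) < ereal (c * t)" if t: "0 < t" "t \<le> s" for t
  proof -
    have "f (p + t *\<^sub>R v) / ereal t < ereal c"
      using convex_fun_diff_quotient_mono[OF cf pr _ t, of p v] fp s(2) by simp
    then show ?thesis
      using t(1) by (simp add: ereal_divide_less_iff mult.commute)
  qed
  with s(1) show ?thesis
    by (rule that)
qed

lemma dir_deriv_normal_ge_of_descent:
  fixes f :: "'a::real_inner \<Rightarrow> ereal"
  assumes cf: "convex_fun f" and pr: "\<And>y. f y \<noteq> -\<infinity>" and fp: "f p = 0"
    and normal: "\<And>y. y \<in> sublev f \<Longrightarrow> inner u (y - p) \<le> 0"
    and u: "norm u = 1" and h: "norm h = 1" and descent: "dir_deriv f p h < ereal (-\<tau>)"
  shows "ereal \<tau> \<le> dir_deriv f p u"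
proof (rule ccontr)
  assume "\<not> ereal \<tau> \<le> dir_deriv f p u"
  then have "dir_deriv f p u < ereal \<tau>"
    by simp
  then obtain s1 where s1: "0 < s1" "\<And>t. 0 < t \<Longrightarrow> t \<le> s1 \<Longrightarrow> f (p + t *\<^sub>R u) < ereal (\<tau> * t)"
    using dir_deriv_less_imp_ray_below[OF cf pr fp] by blast
  obtain s2 where s2: "0 < s2" "\<And>t. 0 < t \<Longrightarrow> t \<le> s2 \<Longrightarrow> f (p + t *\<^sub>R h) < ereal (-\<tau> * t)"
    using dir_deriv_less_imp_ray_below[OF cf pr fp descent] by blast
  define s where "s = min s1 s2"
  have s: "0 < s"
    using s1(1) s2(1) by (simp add: s_def)
  obtain a b where a: "f (p + s *\<^sub>R u) = ereal a" "a < \<tau> * s"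
    and b: "f (p + s *\<^sub>R h) = ereal b" "b < -\<tau> * s"
    using s1(2)[OF s] s2(2)[OF s] pr[of "p + s *\<^sub>R u"] pr[of "p + s *\<^sub>R h"]
    by (cases "f (p + s *\<^sub>R u)"; cases "f (p + s *\<^sub>R h)") (auto simp: s_def)
  define y where "y = (1 - 1/2) *\<^sub>R (p + s *\<^sub>R u) + (1/2) *\<^sub>R (p + s *\<^sub>R h)"
  have "f y \<le> ereal ((1 - 1/2) * a + 1/2 * b)"
    unfolding y_def using a b by (intro convex_funD[OF cf]) auto
  moreover have "(1 - 1/2) * a + 1/2 * b < 0"
    using a b by simp
  ultimately have fy: "f y < 0"
    by (simp add: zero_ereal_def le_less_trans)
  have y: "y - p = (s/2) *\<^sub>R (u + h)"
    by (simp add: y_def algebra_simps flip: scaleR_add_left)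
  have "(s/2) * (1 + inner u h) = inner u (y - p)"
    using u by (simp add: y inner_add_right dot_square_norm)
  also have "\<dots> \<le> 0"
    using fy by (intro normal) (simp add: sublev_def)
  finally have "inner u h \<le> -1"
    using s by (simp add: mult_le_0_iff)
  moreover have "(norm (u + h))\<^sup>2 = (norm u)\<^sup>2 + 2 * inner u h + (norm h)\<^sup>2"
    by (simp add: power2_norm_eq_inner inner_add inner_commute)
  ultimately have "(norm (u + h))\<^sup>2 \<le> 0"
    using u h by simp
  then have "y = p"
    using y by simp
  then show False
    using fy fp by simp
qed

lemma dir_deriv_normal_ge:
  fixes f :: "'a::real_inner \<Rightarrow> ereal"
  assumes cf: "convex_fun f" and pr: "\<And>y. f y \<noteq> -\<infinity>" and fp: "f p = 0"
    and normal: "\<And>y. y \<in> sublev f \<Longrightarrow> inner u (y - p) \<le> 0" and u: "norm u = 1"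
    and slope: "ereal \<tau> < \<bar>INF h\<in>sphere 0 1. dir_deriv f p h\<bar>"
  shows "ereal \<tau> \<le> dir_deriv f p u"
proof -
  let ?M = "INF h\<in>sphere 0 1. dir_deriv f p h"
  from slope have "ereal \<tau> < ?M \<or> ?M < ereal (-\<tau>)"
    by (cases ?M) auto
  then show ?thesis
  proof
    assume "ereal \<tau> < ?M"
    also have "?M \<le> dir_deriv f p u"
      using u by (intro INF_lower) simp
    finally show ?thesis
      by simp
  next
    assume "?M < ereal (-\<tau>)"
    then obtain h where "norm h = 1" "dir_deriv f p h < ereal (-\<tau>)"
      by (auto simp: INF_less_iff)
    then show ?thesis
      using dir_deriv_normal_ge_of_descent[OF cf pr fp normal u] by blast
  qed
qed

lemma closest_point_in_frontier:
  fixes S :: "'a::euclidean_space set"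
  assumes "closed S" "S \<noteq> {}" "x \<notin> S"
  shows "closest_point S x \<in> frontier S"
proof -
  have "closest_point S x \<notin> interior S"
  proof (cases "x \<in> affine hull S")
    case True
    then show ?thesis
      using closest_point_in_rel_interior[OF assms(1,2) True] rel_interior_subset
        interior_subset_rel_interior assms(3) by blast
  next
    case False
    then show ?thesis
      using affine_hull_nonempty_interior by blast
  qed
  then show ?thesis
    using closest_point_in_set[OF assms(1,2)] closure_subset by (auto simp: frontier_def)
qed

lemma sharp_growth_of_abs_INF_dir_deriv:
  fixes f :: "'a::euclidean_space \<Rightarrow> ereal"
  assumes hf: "plsc_convex f" and ne: "sublev f \<noteq> {}" and bdry: "frontier (sublev f) \<subseteq> f -` {0}"
    and slope: "\<And>p. p \<in> frontier (sublev f) \<Longrightarrow> ereal \<tau> < \<bar>INF h\<in>sphere 0 1. dir_deriv f p h\<bar>"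
    and x: "x \<notin> sublev f"
  shows "\<exists>p\<in>sublev f. ereal (\<tau> * dist x p) \<le> f x"
proof -
  note cf = plsc_convexD(1)[OF hf] and pr = plsc_convexD(3)[OF hf]
  have closed: "closed (sublev f)"
    unfolding sublev_def by (rule closed_sublevel_lsc_fun[OF plsc_convexD(2)[OF hf]])
  define p where "p = closest_point (sublev f) x"
  have p: "p \<in> sublev f" "p \<in> frontier (sublev f)"
    unfolding p_def using closest_point_in_set[OF closed ne] closest_point_in_frontier[OF closed ne x]
    by auto
  then have fp: "f p = 0"
    using bdry by auto
  define r where "r = dist x p"
  have r: "0 < r"
    using p x by (auto simp: r_def)
  define u where "u = (1/r) *\<^sub>R (x - p)"
  have u: "norm u = 1" "p + r *\<^sub>R u = x"
    using r by (auto simp: u_def r_def dist_norm)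
  have normal: "inner u (y - p) \<le> 0" if "y \<in> sublev f" for y
    using closest_point_dot[OF convex_sublev[OF cf] closed that, of x] r
    by (simp add: u_def p_def divide_nonpos_pos)
  have "ereal \<tau> \<le> dir_deriv f p u"
    using dir_deriv_normal_ge[OF cf pr fp normal u(1) slope[OF p(2)]] .
  also have "\<dots> \<le> f x / ereal r"
    using dir_deriv_le_quotient[OF cf pr _ r, of p u] fp u(2) by simp
  finally have "ereal (\<tau> * r) \<le> f x"
    using r by (simp add: ereal_le_divide_pos mult.commute)
  then show ?thesis
    using p(1) by (auto simp: r_def)
qed

lemma convex_fun_segment_growth:
  fixes f :: "'a::real_normed_vector \<Rightarrow> ereal"
  assumes cf: "convex_fun f" and "f p \<le> 0" and growth: "ereal (\<tau> * dist x p) \<le> f x"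
    and l: "0 \<le> l" "l \<le> 1"
  shows "f ((1 - l) *\<^sub>R p + l *\<^sub>R x) + ereal (\<tau> * dist x ((1 - l) *\<^sub>R p + l *\<^sub>R x)) \<le> f x"
proof (cases "f x")
  case (real a)
  define z where "z = (1 - l) *\<^sub>R p + l *\<^sub>R x"
  have fz: "f z \<le> ereal ((1 - l) * 0 + l * a)"
    unfolding z_def using assms real by (intro convex_funD[OF cf]) (auto simp: zero_ereal_def)
  have "x - z = (1 - l) *\<^sub>R (x - p)"
    by (simp add: z_def algebra_simps)
  then have "\<tau> * dist x z = (1 - l) * (\<tau> * dist x p)"
    using l by (simp add: dist_norm)
  also have "\<dots> \<le> (1 - l) * a"
    using growth real l by (intro mult_left_mono) auto
  finally have "f z + ereal (\<tau> * dist x z) \<le> ereal (l * a) + ereal ((1 - l) * a)"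
    using fz by (intro add_mono) auto
  then show ?thesis
    using real by (simp add: z_def algebra_simps)
qed (use growth in auto)

lemma lip_diff_dom_eq: "lip_diff f g \<noteq> \<infinity> \<Longrightarrow> {x. f x \<noteq> \<infinity>} = {x. g x \<noteq> \<infinity>}"
  unfolding lip_diff_def by (auto split: if_splits)

lemma lip_diff_bound:
  assumes lip: "lip_diff f g \<le> ereal L" and "f u \<noteq> \<infinity>" "f v \<noteq> \<infinity>"
  shows "\<bar>(real_of_ereal (f u) - real_of_ereal (g u)) - (real_of_ereal (f v) - real_of_ereal (g v))\<bar>
    \<le> L * dist u v"
proof (cases "u = v")
  case False
  have dom: "{x. f x \<noteq> \<infinity>} = {x. g x \<noteq> \<infinity>}"
    using lip by (intro lip_diff_dom_eq) auto
  have "ereal (\<bar>(real_of_ereal (f u) - real_of_ereal (g u)) - (real_of_ereal (f v) - real_of_ereal (g v))\<bar>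
      / norm (u - v)) \<le> lip_diff f g"
    unfolding lip_diff_def if_P[OF dom] using False assms(2,3)
    by (intro SUP_upper2[of "(u, v)"]) auto
  also note lip
  finally show ?thesis
    using False by (simp add: dist_norm divide_le_eq)
qed simp

lemma lip_diff_upper_bound:
  assumes lip: "lip_diff f g \<le> ereal L" and fx: "f x = ereal a" and fz: "f z = ereal b"
    and gx: "g x = ereal \<gamma>"
  shows "g z \<le> ereal (\<gamma> + (b - a) + L * dist x z)"
proof (cases "g z")
  case (real c)
  have "\<bar>(a - \<gamma>) - (b - c)\<bar> \<le> L * dist x z"
    using lip_diff_bound[OF lip, of x z] fx fz gx real by simp
  then show ?thesis
    using real by (simp add: abs_le_iff)
next
  case PInf
  have "lip_diff f g \<noteq> \<infinity>"
    using lip by auto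
  then have "f z \<noteq> \<infinity> \<longleftrightarrow> g z \<noteq> \<infinity>"
    using lip_diff_dom_eq[of f g] by (simp add: set_eq_iff)
  then show ?thesis
    using fz PInf by simp
qed simp

lemma lip_diff_add_lipschitz:
  assumes pr: "\<And>x. f x \<noteq> -\<infinity>" and e: "L-lipschitz_on UNIV e"
  shows "lip_diff f (\<lambda>x. f x + ereal (e x)) \<le> ereal L"
proof -
  have dom: "{x. f x \<noteq> \<infinity>} = {x. f x + ereal (e x) \<noteq> \<infinity>}"
    by auto
  have fin: "real_of_ereal (f x + ereal (e x)) = real_of_ereal (f x) + e x" if "f x \<noteq> \<infinity>" for x
    using that pr[of x] by (cases "f x") auto
  show ?thesis
    unfolding lip_diff_def if_P[OF dom]
  proof (rule SUP_least, clarify)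
    fix u v assume "f u \<noteq> \<infinity>" "f v \<noteq> \<infinity>" "u \<noteq> v"
    moreover have "\<bar>e v - e u\<bar> \<le> L * norm (u - v)"
      using lipschitz_onD[OF e, of v u] by (simp add: dist_real_def dist_norm norm_minus_commute)
    ultimately show "ereal (\<bar>(real_of_ereal (f u) - real_of_ereal (f u + ereal (e u)))
        - (real_of_ereal (f v) - real_of_ereal (f v + ereal (e v)))\<bar> / norm (u - v)) \<le> ereal L"
      by (simp add: fin divide_le_eq)
  qed
qed

lemma tau_min_ge:
  assumes "g y = ereal \<gamma>" "0 < \<gamma>" "ereal t \<le> setdist_e y (sublev g)"
  shows "ereal (t / \<gamma>) \<le> tau_min g"
  unfolding tau_min_def
proof (rule Inf_greatest, clarify)
  fix \<tau> :: real assume "\<forall>x. setdist_e x (sublev g) \<le> ereal \<tau> * max (g x) 0"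
  then have "setdist_e y (sublev g) \<le> ereal \<tau> * max (g y) 0"
    by blast
  also have "\<dots> = ereal (\<tau> * \<gamma>)"
    using assms(1,2) by (simp add: max_def)
  finally have "ereal t \<le> ereal (\<tau> * \<gamma>)"
    using assms(3) by (rule order_trans[rotated])
  then show "ereal (t / \<gamma>) \<le> ereal \<tau>"
    using assms(2) by (simp add: divide_le_eq)
qed

lemma segment_point_in_perturbed_sublev:
  fixes f g :: "'a::real_normed_vector \<Rightarrow> ereal"
  assumes cf: "convex_fun f" and pr: "\<And>x. f x \<noteq> -\<infinity>" and lip: "lip_diff f g \<le> ereal (\<tau>/2)"
    and fp: "f p \<le> 0" and growth: "ereal (\<tau> * dist x p) \<le> f x"
    and gx: "g x = ereal \<gamma>" "0 < \<gamma>" and far: "2 * \<gamma> < \<tau> * dist x p"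
  shows "\<exists>z\<in>sublev g. \<tau> * dist x z = 2 * \<gamma>"
proof -
  define l where "l = 1 - 2 * \<gamma> / (\<tau> * dist x p)"
  have l: "0 \<le> l" "l \<le> 1"
    using far gx(2) by (auto simp: l_def divide_le_eq)
  define z where "z = (1 - l) *\<^sub>R p + l *\<^sub>R x"
  have "x - z = (1 - l) *\<^sub>R (x - p)"
    by (simp add: z_def algebra_simps)
  then have dz: "\<tau> * dist x z = 2 * \<gamma>"
    using far gx(2) by (auto simp: dist_norm l_def)
  have decrease: "f z + ereal (2 * \<gamma>) \<le> f x"
    using convex_fun_segment_growth[OF cf fp growth l, folded z_def] dz by simp
  have "lip_diff f g \<noteq> \<infinity>"
    using lip by auto
  then have "f x \<noteq> \<infinity>"
    using lip_diff_dom_eq[of f g] gx(1) by (simp add: set_eq_iff)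
  then obtain a where a: "f x = ereal a"
    using pr[of x] by (cases "f x") auto
  then obtain b where b: "f z = ereal b"
    using decrease pr[of z] by (cases "f z") auto
  have "g z \<le> ereal (\<gamma> + (b - a) + \<tau>/2 * dist x z)"
    by (rule lip_diff_upper_bound[OF lip a b gx(1)])
  also have "\<dots> \<le> 0"
    using decrease a b dz by simp
  finally show ?thesis
    using dz by (auto simp: sublev_def)
qed

lemma exists_near_sublev_of_sharp_growth:
  fixes f g :: "'a::real_normed_vector \<Rightarrow> ereal"
  assumes cf: "convex_fun f" and pr: "\<And>x. f x \<noteq> -\<infinity>"
    and growth: "\<And>x. x \<notin> sublev f \<Longrightarrow> \<exists>p\<in>sublev f. ereal (\<tau> * dist x p) \<le> f x"
    and sub: "sublev f \<subseteq> sublev g" and lip: "lip_diff f g \<le> ereal (\<tau>/2)"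
    and gx: "g x = ereal \<gamma>" "0 < \<gamma>"
  shows "\<exists>z\<in>sublev g. \<tau> * dist x z \<le> 2 * \<gamma>"
proof -
  have "x \<notin> sublev f"
    using sub gx by (auto simp: sublev_def)
  then obtain p where p: "p \<in> sublev f" "ereal (\<tau> * dist x p) \<le> f x"
    using growth by blast
  show ?thesis
  proof (cases "\<tau> * dist x p \<le> 2 * \<gamma>")
    case True
    then show ?thesis
      using p sub by blast
  next
    case False
    then show ?thesis
      using segment_point_in_perturbed_sublev[OF cf pr lip _ p(2) gx] p(1)
      by (force simp: sublev_def)
  qed
qed

lemma tau_min_le_of_sharp_growth:
  fixes f g :: "'a::real_normed_vector \<Rightarrow> ereal"
  assumes cf: "convex_fun f" and pr: "\<And>x. f x \<noteq> -\<infinity>" and prg: "\<And>x. g x \<noteq> -\<infinity>"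
    and \<tau>: "0 < \<tau>" and growth: "\<And>x. x \<notin> sublev f \<Longrightarrow> \<exists>p\<in>sublev f. ereal (\<tau> * dist x p) \<le> f x"
    and sub: "sublev f \<subseteq> sublev g" and lip: "lip_diff f g \<le> ereal (\<tau>/2)"
  shows "tau_min g \<le> ereal (2/\<tau>)"
proof -
  have "setdist_e x (sublev g) \<le> ereal (2/\<tau>) * max (g x) 0" for x
  proof (cases "g x")
    case (real \<gamma>)
    show ?thesis
    proof (cases "0 < \<gamma>")
      case True
      then obtain z where z: "z \<in> sublev g" "\<tau> * dist x z \<le> 2 * \<gamma>"
        using exists_near_sublev_of_sharp_growth[OF cf pr growth sub lip real] by blast
      have "setdist_e x (sublev g) \<le> ereal (dist x z)"
        unfolding setdist_e_def using z(1) by (rule INF_lower)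
      also have "\<dots> \<le> ereal (2/\<tau>) * max (g x) 0"
        using real True \<tau> z(2) by (simp add: max_def field_simps)
      finally show ?thesis .
    next
      case False
      then have "x \<in> sublev g"
        using real by (simp add: sublev_def)
      then have "setdist_e x (sublev g) \<le> ereal (dist x x)"
        unfolding setdist_e_def by (rule INF_lower)
      also have "\<dots> = ereal (2/\<tau>) * max (g x) 0"
        using False real by (simp add: max_def zero_ereal_def)
      finally show ?thesis .
    qed
  qed (use \<tau> prg in auto)
  then show ?thesis
    unfolding tau_min_def using \<tau> by (intro Inf_lower) auto
qed

lemma tau_min_le_of_abs_INF_dir_deriv:
  fixes f g :: "'a::euclidean_space \<Rightarrow> ereal"
  assumes hf: "plsc_convex f" and ne: "sublev f \<noteq> {}" and bdry: "frontier (sublev f) \<subseteq> f -` {0}"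
    and \<tau>: "0 < \<tau>"
    and slope: "ereal \<tau> < (INF p\<in>frontier (sublev f). \<bar>INF h\<in>sphere 0 1. dir_deriv f p h\<bar>)"
    and hg: "plsc_convex g" and sub: "sublev f \<subseteq> sublev g" and lip: "lip_diff f g < ereal (\<tau>/2)"
  shows "tau_min g \<le> ereal (2/\<tau>)"
proof (rule tau_min_le_of_sharp_growth[OF plsc_convexD(1)[OF hf]])
  show "f x \<noteq> -\<infinity>" "g x \<noteq> -\<infinity>" for x
    using plsc_convexD(3) hf hg by blast+
  show "\<exists>p\<in>sublev f. ereal (\<tau> * dist x p) \<le> f x" if "x \<notin> sublev f" for x
    using slope by (intro sharp_growth_of_abs_INF_dir_deriv[OF hf ne bdry _ that])
      (meson INF_lower order_less_le_trans)
qed (use \<tau> sub lip in auto)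

lemma sublev_add_dist_eq_singleton:
  fixes f :: "'a::real_normed_vector \<Rightarrow> ereal"
  assumes cf: "convex_fun f" and pr: "\<And>y. f y \<noteq> -\<infinity>" and fxb: "f xb = 0"
    and slope: "ereal (-\<eta>) < (INF h\<in>sphere 0 1. dir_deriv f xb h)"
  shows "sublev (\<lambda>x. f x + ereal (\<eta> * dist xb x)) = {xb}"
proof
  show "{xb} \<subseteq> sublev (\<lambda>x. f x + ereal (\<eta> * dist xb x))"
    using fxb by (simp add: sublev_def)
  show "sublev (\<lambda>x. f x + ereal (\<eta> * dist xb x)) \<subseteq> {xb}"
  proof
    fix z assume z: "z \<in> sublev (\<lambda>x. f x + ereal (\<eta> * dist xb x))"
    show "z \<in> {xb}"
    proof (rule ccontr)
      assume "z \<notin> {xb}"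
      define d where "d = dist xb z"
      have d: "0 < d"
        using \<open>z \<notin> {xb}\<close> by (simp add: d_def)
      define u where "u = (1/d) *\<^sub>R (z - xb)"
      have u: "norm u = 1" "xb + d *\<^sub>R u = z"
        using d by (auto simp: u_def d_def dist_norm norm_minus_commute)
      have "ereal (-\<eta>) < dir_deriv f xb u"
        using u(1) by (intro order_less_le_trans[OF slope INF_lower]) simp
      also have "\<dots> \<le> f z / ereal d"
        using dir_deriv_le_quotient[OF cf pr _ d, of xb u] fxb u(2) by simp
      finally have "ereal (-\<eta> * d) < f z"
        using d by (simp add: ereal_less_divide_iff mult.commute)
      then have "0 < f z + ereal (\<eta> * d)"
        by (cases "f z") auto
      then show False
        using z by (simp add: sublev_def d_def)
    qed
  qed
qed

lemma exists_ray_point_near_INF_dir_deriv: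
  assumes cf: "convex_fun f" and pr: "\<And>y. f y \<noteq> -\<infinity>" and fp: "f p = 0"
    and M: "(INF h\<in>sphere 0 1. dir_deriv f p h) = ereal m" and \<delta>: "0 < \<delta>"
  obtains h t a where "norm h = 1" "0 < t" "f (p + t *\<^sub>R h) = ereal a" "m * t \<le> a" "a < (m + \<delta>) * t"
proof -
  have "(INF h\<in>sphere 0 1. dir_deriv f p h) < ereal (m + \<delta>)"
    using M \<delta> by simp
  then obtain h where h: "norm h = 1" "dir_deriv f p h < ereal (m + \<delta>)"
    by (auto simp: INF_less_iff)
  then obtain t where t: "0 < t" "f (p + t *\<^sub>R h) < ereal ((m + \<delta>) * t)"
    using dir_deriv_less_imp_ray_below[OF cf pr fp h(2)] by blast
  have "ereal m \<le> dir_deriv f p h"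
    unfolding M[symmetric] using h(1) by (intro INF_lower) simp
  also have "\<dots> \<le> f (p + t *\<^sub>R h) / ereal t"
    using dir_deriv_le_quotient[OF cf pr _ t(1), of p h] fp by simp
  finally show ?thesis
    using that h(1) t by (cases "f (p + t *\<^sub>R h)") (auto simp: field_simps)
qed

lemma abs_INF_dir_deriv_ge_of_tau_min_le:
  fixes f :: "'a::real_normed_vector \<Rightarrow> ereal"
  assumes cf: "convex_fun f" and pr: "\<And>y. f y \<noteq> -\<infinity>" and fxb: "f xb = 0"
    and \<eta>: "0 < \<eta>" and c: "3 * \<eta> * c < 1"
    and tm: "tau_min (\<lambda>x. f x + ereal (\<eta> * dist xb x)) \<le> ereal c"
  shows "ereal \<eta> \<le> \<bar>INF h\<in>sphere 0 1. dir_deriv f xb h\<bar>"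
proof (rule ccontr)
  define g where "g = (\<lambda>x. f x + ereal (\<eta> * dist xb x))"
  assume "\<not> ?thesis"
  then obtain m where M: "(INF h\<in>sphere 0 1. dir_deriv f xb h) = ereal m" and m: "\<bar>m\<bar> < \<eta>"
    by (cases "INF h\<in>sphere 0 1. dir_deriv f xb h") auto
  have Sg: "sublev g = {xb}"
    unfolding g_def using m by (intro sublev_add_dist_eq_singleton[OF cf pr fxb]) (simp add: M)
  obtain h t a where h: "norm h = 1" and t: "0 < t"
    and a: "f (xb + t *\<^sub>R h) = ereal a" "m * t \<le> a" "a < (m + \<eta>) * t"
    by (rule exists_ray_point_near_INF_dir_deriv[OF cf pr fxb M \<eta>])
  define y where "y = xb + t *\<^sub>R h"
  have gy: "g y = ereal (a + \<eta> * t)"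
    using a(1) h t by (simp add: g_def y_def dist_norm)
  have "0 < (m + \<eta>) * t" "(m + \<eta>) * t < (2 * \<eta>) * t"
    using m t by (simp_all add: abs_less_iff)
  then have bounds: "0 < a + \<eta> * t" "a + \<eta> * t < 3 * \<eta> * t"
    using a(2,3) by (simp_all add: distrib_right)
  have "ereal t \<le> setdist_e y (sublev g)"
    using h t by (simp add: Sg setdist_e_def y_def dist_norm)
  then have "ereal (t / (a + \<eta> * t)) \<le> tau_min g"
    using gy bounds(1) by (rule tau_min_ge[rotated -1])
  also have "\<dots> \<le> ereal c"
    using tm by (simp add: g_def)
  finally have "t / (a + \<eta> * t) \<le> c"
    by simp
  moreover have "1 / (3 * \<eta>) < t / (a + \<eta> * t)"
    using bounds t \<eta> by (simp add: field_simps)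
  moreover have "c < 1 / (3 * \<eta>)"
    using c \<eta> by (simp add: field_simps)
  ultimately show False
    by simp
qed

lemma abs_INF_dir_deriv_ge_of_stable_error_bound:
  fixes f :: "'a::euclidean_space \<Rightarrow> ereal"
  assumes hf: "plsc_convex f" and bdry: "frontier (sublev f) \<subseteq> f -` {0}"
    and c: "0 < c" and \<epsilon>: "0 < \<epsilon>"
    and stable: "\<forall>g. plsc_convex g \<and> frontier (sublev f) \<inter> g -` {0} \<noteq> {}
      \<and> lip_diff f g < ereal \<epsilon> \<longrightarrow> tau_min g \<le> ereal c"
    and xb: "xb \<in> frontier (sublev f)"
  shows "ereal (min (\<epsilon>/2) (1/(4*c))) \<le> \<bar>INF h\<in>sphere 0 1. dir_deriv f xb h\<bar>"
proof -
  define \<eta> where "\<eta> = min (\<epsilon>/2) (1/(4*c))"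
  define g where "g = (\<lambda>x. f x + ereal (\<eta> * dist xb x))"
  have \<eta>: "0 < \<eta>" "\<eta> < \<epsilon>" "3 * \<eta> * c < 1"
    using c \<epsilon> by (auto simp: \<eta>_def min_def field_simps)
  note cf = plsc_convexD(1)[OF hf] and pr = plsc_convexD(3)[OF hf]
  have fxb: "f xb = 0"
    using bdry xb by auto
  have "plsc_convex g"
    unfolding g_def using \<eta>(1)
    by (intro plsc_convex_add[OF hf] continuous_intros convex_on_cmul convex_on_dist) auto
  moreover have "xb \<in> frontier (sublev f) \<inter> g -` {0}"
    using xb fxb by (simp add: g_def)
  moreover have "\<eta>-lipschitz_on UNIV (\<lambda>x. \<eta> * dist xb x)"
  proof (rule lipschitz_onI)
    fix x y :: 'a
    have "\<bar>dist xb x - dist xb y\<bar> \<le> dist x y"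
      using abs_dist_diff_le[of x xb y] by (simp add: dist_commute)
    then show "dist (\<eta> * dist xb x) (\<eta> * dist xb y) \<le> \<eta> * dist x y"
      using \<eta>(1) by (simp add: dist_real_def abs_mult flip: right_diff_distrib)
  qed (use \<eta>(1) in simp)
  then have "lip_diff f g \<le> ereal \<eta>"
    unfolding g_def by (intro lip_diff_add_lipschitz pr)
  then have "lip_diff f g < ereal \<epsilon>"
    using \<eta>(2) by (simp add: le_less_trans)
  ultimately have "tau_min g \<le> ereal c"
    using stable by blast
  then show ?thesis
    unfolding g_def \<eta>_def[symmetric] by (rule abs_INF_dir_deriv_ge_of_tau_min_le[OF cf pr fxb \<eta>(1,3)])
qed

theorem theorem7:
  fixes f :: "real ^ 'm \<Rightarrow> ereal"
  assumes hf: "plsc_convex f"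
    and hS: "sublev f \<noteq> {}"
    and hbd: "frontier (sublev f) \<subseteq> f -` {0}"
  defines "stmt_i \<equiv> (\<exists>\<tau>::real. \<tau> > 0 \<and>
      (INF xb\<in>frontier (sublev f). \<bar>INF h\<in>sphere 0 1. dir_deriv f xb h\<bar>) > ereal \<tau>)"
    and "stmt_ii \<equiv> (\<exists>c \<epsilon>::real. c > 0 \<and> \<epsilon> > 0 \<and>
      (\<forall>g :: real ^ 'm \<Rightarrow> ereal. plsc_convex g \<and> sublev f \<subseteq> sublev g
          \<and> lip_diff f g < ereal \<epsilon> \<longrightarrow> tau_min g \<le> ereal c))"
    and "stmt_iii \<equiv> (\<exists>c \<epsilon>::real. c > 0 \<and> \<epsilon> > 0 \<and>
      (\<forall>g :: real ^ 'm \<Rightarrow> ereal. plsc_convex g \<and> frontier (sublev f) \<inter> g -` {0} \<noteq> {}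
          \<and> lip_diff f g < ereal \<epsilon> \<longrightarrow> tau_min g \<le> ereal c))"
  shows "(stmt_i \<longrightarrow> stmt_ii) \<and> (stmt_iii \<longrightarrow> stmt_i)"
proof (intro conjI impI)
  assume stmt_i
  then obtain \<tau> where "0 < \<tau>"
    and "ereal \<tau> < (INF xb\<in>frontier (sublev f). \<bar>INF h\<in>sphere 0 1. dir_deriv f xb h\<bar>)"
    unfolding stmt_i_def by blast
  then show stmt_ii
    unfolding stmt_ii_def
    by (intro exI[of _ "2/\<tau>"] exI[of _ "\<tau>/2"]) (auto intro: tau_min_le_of_abs_INF_dir_deriv[OF hf hS hbd])
next
  assume stmt_iii
  then obtain c \<epsilon> :: real where c: "0 < c" and \<epsilon>: "0 < \<epsilon>"
    and stable: "\<forall>g :: real ^ 'm \<Rightarrow> ereal. plsc_convex g \<and> frontier (sublev f) \<inter> g -` {0} \<noteq> {}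
      \<and> lip_diff f g < ereal \<epsilon> \<longrightarrow> tau_min g \<le> ereal c"
    unfolding stmt_iii_def by blast
  define \<eta> where "\<eta> = min (\<epsilon>/2) (1/(4*c))"
  have "ereal \<eta> \<le> (INF xb\<in>frontier (sublev f). \<bar>INF h\<in>sphere 0 1. dir_deriv f xb h\<bar>)"
    unfolding \<eta>_def
    by (intro INF_greatest abs_INF_dir_deriv_ge_of_stable_error_bound[OF hf hbd c \<epsilon> stable])
  moreover have "0 < \<eta>"
    using c \<epsilon> by (simp add: \<eta>_def)
  ultimately show stmt_i
    unfolding stmt_i_def by (intro exI[of _ "\<eta>/2"]) (auto intro: order.strict_trans2[rotated])
qed

end
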